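(* Let $n\ge 1$ and $0\le k\le n$, and let $L_n$ denote the number of Latin squares of order $n$. The number of preference profiles for $n$ men and $n$ women in which the men's preferences form a Latin square and there are exactly $k$ pairs of soulmates is \[L_n \binom{n}{k} (n-1)^{n-k} (n-1)!^n\] (with the convention $0^0=1$).
   Context: A preference profile for $n$ (labeled) men and $n$ (labeled) women consists of, for each man, a strict ranking of the women (bijection to $\{1,\dots,n\}$, 1 = favorite), and for each woman, a strict ranking of the men. The men's preferences form a Latin square if the $n\times n$ matrix whose $i$-th row lists the women in man $i$'s order of preference (the entry in column $r$ being the woman he ranks $r$-th) is a Latin square, i.e. for each rank $r$ the women ranked $r$-th by the different men are all distinct. Women's preferences are unrestricted. A man and a woman are soulmates if each ranks the other first. *)

theory Defs
  imports "HOL-Library.FuncSet"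
begin

definition latin_squares :: "nat \<Rightarrow> (nat \<Rightarrow> nat \<Rightarrow> nat) set" where
  "latin_squares n = {M. M \<in> {0..<n} \<rightarrow>\<^sub>E ({0..<n} \<rightarrow>\<^sub>E {0..<n}) \<and>
      (\<forall>i<n. bij_betw (M i) {0..<n} {0..<n}) \<and>
      (\<forall>c<n. bij_betw (\<lambda>i. M i c) {0..<n} {0..<n})}"

definition num_latin_squares :: "nat \<Rightarrow> nat" where
  "num_latin_squares n = card (latin_squares n)"

text \<open>A ranking of n people: a bijection from ranks {1..n} (1 = favourite) to the
people {0..<n}, extensional outside {1..n}.\<close>
definition rankings :: "nat \<Rightarrow> (nat \<Rightarrow> nat) set" where
  "rankings n = {f. f \<in> {1..n} \<rightarrow>\<^sub>E {0..<n} \<and> bij_betw f {1..n} {0..<n}}"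

text \<open>Preference profiles: men and women are labelled 0..n-1; mp i r is the woman
ranked r-th by man i, wp j r the man ranked r-th by woman j.\<close>
definition profiles :: "nat \<Rightarrow> ((nat \<Rightarrow> nat \<Rightarrow> nat) \<times> (nat \<Rightarrow> nat \<Rightarrow> nat)) set" where
  "profiles n = {(mp, wp). mp \<in> {0..<n} \<rightarrow>\<^sub>E rankings n \<and> wp \<in> {0..<n} \<rightarrow>\<^sub>E rankings n}"

definition men_latin :: "nat \<Rightarrow> (nat \<Rightarrow> nat \<Rightarrow> nat) \<Rightarrow> bool" where
  "men_latin n mp \<longleftrightarrow> (\<forall>r\<in>{1..n}. inj_on (\<lambda>i. mp i r) {0..<n})"

definition soulmate_pairs :: "nat \<Rightarrow> (nat \<Rightarrow> nat \<Rightarrow> nat) \<Rightarrow> (nat \<Rightarrow> nat \<Rightarrow> nat) \<Rightarrow> (nat \<times> nat) set" where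
  "soulmate_pairs n mp wp = {(i, j). i < n \<and> j < n \<and> mp i 1 = j \<and> wp j 1 = i}"

end

theory Submission
  imports Defs
begin

text \<open>Shifting ranks 1..n to columns 0..n-1 turns the men's preferences into an arbitrary
Latin square. In it the first column is a permutation, so every woman j is ranked first by
exactly one man \<open>\<tau> j\<close>, and she has a soulmate iff she ranks \<open>\<tau> j\<close> first. The women's
rankings are independent: for each woman, (n-1)! rankings put \<open>\<tau> j\<close> first and (n-1)(n-1)!
do not, so choosing the k women with soulmates gives
\<open>(n choose k) * (n-1)!^k * ((n-1) * (n-1)!)^(n-k)\<close> profiles per Latin square.\<close>

lemma bij_betw_iff_inj_on_same_card:
  assumes "f ` A \<subseteq> B" "finite B" "card A = card B"
  shows "bij_betw f A B \<longleftrightarrow> inj_on f A"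
proof
  assume "inj_on f A"
  with assms have "f ` A = B"
    by (metis card_image card_subset_eq)
  with \<open>inj_on f A\<close> show "bij_betw f A B"
    by (rule bij_betw_imageI)
qed (rule bij_betw_imp_inj_on)

lemma card_inj_on_PiE_same_card:
  assumes "finite A" "finite B" "card A = card B"
  shows "card {f \<in> A \<rightarrow>\<^sub>E B. inj_on f A} = fact (card A)"
  using card_inj_on_subset_funcset[of A B A] assms by (simp add: fact_prod_rev)

lemma card_inj_on_PiE_fixed_value:
  assumes "finite A" "finite B" "card A = card B" "a \<in> A" "b \<in> B"
  shows "card {f \<in> A \<rightarrow>\<^sub>E B. inj_on f A \<and> f a = b} = fact (card A - 1)"
proof -
  let ?A' = "A - {a}" and ?B' = "B - {b}"
  have "bij_betw (\<lambda>f. restrict f ?A') {f \<in> A \<rightarrow>\<^sub>E B. inj_on f A \<and> f a = b}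
          {g \<in> ?A' \<rightarrow>\<^sub>E ?B'. inj_on g ?A'}"
  proof (rule bij_betw_byWitness[where f' = "\<lambda>g. g(a := b)"])
    show "\<forall>f\<in>{f \<in> A \<rightarrow>\<^sub>E B. inj_on f A \<and> f a = b}. (restrict f ?A')(a := b) = f"
      using assms(4) by (auto simp: PiE_iff extensional_def fun_eq_iff)
    show "\<forall>g\<in>{g \<in> ?A' \<rightarrow>\<^sub>E ?B'. inj_on g ?A'}. restrict (g(a := b)) ?A' = g"
      by (auto simp: PiE_iff extensional_def fun_eq_iff)
    show "(\<lambda>f. restrict f ?A') ` {f \<in> A \<rightarrow>\<^sub>E B. inj_on f A \<and> f a = b}
            \<subseteq> {g \<in> ?A' \<rightarrow>\<^sub>E ?B'. inj_on g ?A'}"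
      using assms(4) by (auto simp: PiE_iff inj_on_def)
    show "(\<lambda>g. g(a := b)) ` {g \<in> ?A' \<rightarrow>\<^sub>E ?B'. inj_on g ?A'}
            \<subseteq> {f \<in> A \<rightarrow>\<^sub>E B. inj_on f A \<and> f a = b}"
    proof clarify
      fix g assume g: "g \<in> ?A' \<rightarrow>\<^sub>E ?B'" "inj_on g ?A'"
      have "inj_on (g(a := b)) ?A'" "b \<notin> (g(a := b)) ` ?A'"
        using g by (auto simp: inj_on_def PiE_iff)
      then have "inj_on (g(a := b)) A"
        using inj_on_insert[of "g(a := b)" a ?A'] insert_Diff[OF assms(4)] by simp
      then show "g(a := b) \<in> A \<rightarrow>\<^sub>E B \<and> inj_on (g(a := b)) A \<and> (g(a := b)) a = b"
        using g assms(4,5) by (auto simp: PiE_iff extensional_def insert_absorb)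
    qed
  qed
  then have "card {f \<in> A \<rightarrow>\<^sub>E B. inj_on f A \<and> f a = b}
      = card {g \<in> ?A' \<rightarrow>\<^sub>E ?B'. inj_on g ?A'}"
    by (rule bij_betw_same_card)
  also have "\<dots> = fact (card A - 1)"
    using assms by (simp add: card_inj_on_PiE_same_card)
  finally show ?thesis .
qed

lemma card_PiE_exactly_hits:
  assumes "finite I" "finite R" and hits: "\<And>j. j \<in> I \<Longrightarrow> card {r \<in> R. P j r} = a"
  shows "card {w \<in> I \<rightarrow>\<^sub>E R. card {j \<in> I. P j (w j)} = k}
         = (card I choose k) * a ^ k * (card R - a) ^ (card I - k)"
proof -
  define F where "F J = (\<Pi>\<^sub>E j\<in>I. if j \<in> J then {r \<in> R. P j r} else {r \<in> R. \<not> P j r})" for J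
  define \<J> where "\<J> = {J. J \<subseteq> I \<and> card J = k}"
  have F_iff: "w \<in> F J \<longleftrightarrow> w \<in> I \<rightarrow>\<^sub>E R \<and> {j \<in> I. P j (w j)} = J" if "J \<subseteq> I" for w J
    using that by (auto simp: F_def PiE_iff split: if_splits)
  have "{w \<in> I \<rightarrow>\<^sub>E R. card {j \<in> I. P j (w j)} = k} = (\<Union>J\<in>\<J>. F J)"
  proof (intro equalityI subsetI)
    fix w assume "w \<in> {w \<in> I \<rightarrow>\<^sub>E R. card {j \<in> I. P j (w j)} = k}"
    then have "{j \<in> I. P j (w j)} \<in> \<J>" "w \<in> F {j \<in> I. P j (w j)}"
      by (simp_all add: \<J>_def F_iff)
    then show "w \<in> (\<Union>J\<in>\<J>. F J)" by blast
  qed (auto simp: \<J>_def F_iff)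
  moreover have "card (\<Union>J\<in>\<J>. F J) = (\<Sum>J\<in>\<J>. card (F J))"
  proof (rule card_UN_disjoint)
    show "finite \<J>" "\<forall>J\<in>\<J>. finite (F J)"
      using assms(1,2) by (auto simp: \<J>_def F_def intro!: finite_PiE)
    show "\<forall>J\<in>\<J>. \<forall>J'\<in>\<J>. J \<noteq> J' \<longrightarrow> F J \<inter> F J' = {}"
      unfolding \<J>_def by (metis (no_types, lifting) F_iff disjoint_iff mem_Collect_eq)
  qed
  moreover have "card (F J) = a ^ k * (card R - a) ^ (card I - k)" if "J \<in> \<J>" for J
  proof -
    have J: "J \<subseteq> I" "card J = k"
      using that by (auto simp: \<J>_def)
    have misses: "card {r \<in> R. \<not> P j r} = card R - a" if "j \<in> I" for j
    proof -
      have "{r \<in> R. \<not> P j r} = R - {r \<in> R. P j r}" by blast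
      then show ?thesis
        using hits[OF that] assms(2) by (simp add: card_Diff_subset)
    qed
    have "card (F J) = (\<Prod>j\<in>I. if j \<in> J then a else card R - a)"
      unfolding F_def using assms(1) by (auto simp: card_PiE hits misses intro!: prod.cong)
    also have "\<dots> = a ^ card J * (card R - a) ^ card (I - J)"
      using assms(1) J(1) by (simp add: prod.If_cases Int_absorb1 Diff_eq[symmetric])
    finally show ?thesis
      using assms(1) J by (simp add: card_Diff_subset finite_subset)
  qed
  moreover have "card \<J> = card I choose k"
    unfolding \<J>_def using assms(1) by (rule n_subsets)
  ultimately show ?thesis
    by (simp add: mult.assoc)
qed

lemma rankings_eq_inj_on: "rankings n = {f \<in> {1..n} \<rightarrow>\<^sub>E {0..<n}. inj_on f {1..n}}"
proof -
  have "bij_betw f {1..n} {0..<n} \<longleftrightarrow> inj_on f {1..n}" if "f \<in> {1..n} \<rightarrow>\<^sub>E {0..<n}" for f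
    using that by (intro bij_betw_iff_inj_on_same_card) auto
  then show ?thesis
    unfolding rankings_def by blast
qed

lemma finite_rankings: "finite (rankings n)"
  unfolding rankings_def by (rule finite_subset[of _ "{1..n} \<rightarrow>\<^sub>E {0..<n}"]) (auto intro: finite_PiE)

lemma card_rankings: "card (rankings n) = fact n"
  unfolding rankings_eq_inj_on by (simp add: card_inj_on_PiE_same_card)

lemma card_rankings_first_choice:
  assumes "m < n"
  shows "card {f \<in> rankings n. f 1 = m} = fact (n - 1)"
proof -
  have "{f \<in> rankings n. f 1 = m} = {f \<in> {1..n} \<rightarrow>\<^sub>E {0..<n}. inj_on f {1..n} \<and> f 1 = m}"
    by (auto simp: rankings_eq_inj_on)
  then show ?thesis
    using assms card_inj_on_PiE_fixed_value[of "{1..n}" "{0..<n}" 1 m] by simp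
qed

lemma rankings_iff_shifted:
  "f \<in> rankings n \<longleftrightarrow> f \<in> extensional {1..n} \<and> bij_betw (\<lambda>c. f (Suc c)) {0..<n} {0..<n}"
proof -
  have "bij_betw Suc {0..<n} {1..n}"
    by (simp add: atLeastLessThanSuc_atLeastAtMost[symmetric] flip: image_Suc_atLeastLessThan)
  then have "bij_betw f {1..n} {0..<n} \<longleftrightarrow> bij_betw (f \<circ> Suc) {0..<n} {0..<n}"
    by (rule bij_betw_comp_iff)
  then show ?thesis
    unfolding rankings_def by (auto simp: PiE_iff o_def dest: bij_betwE)
qed

definition latin_men_prefs :: "nat \<Rightarrow> (nat \<Rightarrow> nat \<Rightarrow> nat) set" where
  "latin_men_prefs n = {mp \<in> {0..<n} \<rightarrow>\<^sub>E rankings n. men_latin n mp}"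

definition square_of_prefs :: "nat \<Rightarrow> (nat \<Rightarrow> nat \<Rightarrow> nat) \<Rightarrow> nat \<Rightarrow> nat \<Rightarrow> nat" where
  "square_of_prefs n mp = (\<lambda>i\<in>{0..<n}. \<lambda>c\<in>{0..<n}. mp i (Suc c))"

definition prefs_of_square :: "nat \<Rightarrow> (nat \<Rightarrow> nat \<Rightarrow> nat) \<Rightarrow> nat \<Rightarrow> nat \<Rightarrow> nat" where
  "prefs_of_square n M = (\<lambda>i\<in>{0..<n}. \<lambda>r\<in>{1..n}. M i (r - 1))"

lemma square_of_prefs_in_latin_squares:
  assumes mp: "mp \<in> latin_men_prefs n"
  shows "square_of_prefs n mp \<in> latin_squares n"
proof -
  have rows: "bij_betw (\<lambda>c. mp i (Suc c)) {0..<n} {0..<n}" if "i < n" for i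
    using mp that by (auto simp: latin_men_prefs_def rankings_iff_shifted)
  have entries: "mp i (Suc c) < n" if "i < n" "c < n" for i c
    using bij_betwE[OF rows[OF that(1)]] that(2) by simp
  have cols: "bij_betw (\<lambda>i. mp i (Suc c)) {0..<n} {0..<n}" if "c < n" for c
  proof (subst bij_betw_iff_inj_on_same_card)
    show "(\<lambda>i. mp i (Suc c)) ` {0..<n} \<subseteq> {0..<n}"
      using entries that by auto
    show "inj_on (\<lambda>i. mp i (Suc c)) {0..<n}"
      using mp that by (auto simp: latin_men_prefs_def men_latin_def)
  qed simp_all
  have "bij_betw (\<lambda>i. square_of_prefs n mp i c) {0..<n} {0..<n}" if "c < n" for c
  proof -
    have "bij_betw (\<lambda>i. square_of_prefs n mp i c) {0..<n} {0..<n}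
        \<longleftrightarrow> bij_betw (\<lambda>i. mp i (Suc c)) {0..<n} {0..<n}"
      using that by (intro bij_betw_cong) (simp add: square_of_prefs_def)
    with cols[OF that] show ?thesis by simp
  qed
  then show ?thesis
    using rows entries by (simp add: latin_squares_def square_of_prefs_def)
qed

lemma prefs_of_square_in_latin_men_prefs:
  assumes M: "M \<in> latin_squares n"
  shows "prefs_of_square n M \<in> latin_men_prefs n"
proof -
  have "prefs_of_square n M i \<in> rankings n" if "i < n" for i
  proof -
    have "bij_betw (\<lambda>c. prefs_of_square n M i (Suc c)) {0..<n} {0..<n}
        \<longleftrightarrow> bij_betw (M i) {0..<n} {0..<n}"
      using that by (intro bij_betw_cong) (simp add: prefs_of_square_def)
    then show ?thesis
      using M that by (simp add: rankings_iff_shifted latin_squares_def prefs_of_square_def)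
  qed
  moreover have "inj_on (\<lambda>i. prefs_of_square n M i r) {0..<n}" if "r \<in> {1..n}" for r
  proof -
    have "bij_betw (\<lambda>i. M i (r - 1)) {0..<n} {0..<n}"
      using M that by (auto simp: latin_squares_def)
    moreover have "inj_on (\<lambda>i. prefs_of_square n M i r) {0..<n}
        \<longleftrightarrow> inj_on (\<lambda>i. M i (r - 1)) {0..<n}"
      using that by (intro inj_on_cong) (simp add: prefs_of_square_def)
    ultimately show ?thesis
      by (simp add: bij_betw_def)
  qed
  ultimately show ?thesis
    by (auto simp: latin_men_prefs_def men_latin_def prefs_of_square_def)
qed

lemma bij_betw_square_of_prefs:
  "bij_betw (square_of_prefs n) (latin_men_prefs n) (latin_squares n)"
proof (rule bij_betw_byWitness[where f' = "prefs_of_square n"])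
  show "\<forall>mp\<in>latin_men_prefs n. prefs_of_square n (square_of_prefs n mp) = mp"
    by (auto simp: latin_men_prefs_def rankings_def prefs_of_square_def square_of_prefs_def
        PiE_iff extensional_def fun_eq_iff)
  show "\<forall>M\<in>latin_squares n. square_of_prefs n (prefs_of_square n M) = M"
    by (auto simp: latin_squares_def prefs_of_square_def square_of_prefs_def
        PiE_iff extensional_def fun_eq_iff)
qed (auto simp: square_of_prefs_in_latin_squares prefs_of_square_in_latin_men_prefs)

lemma card_latin_men_prefs: "card (latin_men_prefs n) = num_latin_squares n"
  unfolding num_latin_squares_def by (rule bij_betw_same_card[OF bij_betw_square_of_prefs])

lemma first_choices_bij_betw:
  assumes "mp \<in> latin_men_prefs n" "n \<ge> 1"
  shows "bij_betw (\<lambda>i. mp i 1) {0..<n} {0..<n}"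
proof (subst bij_betw_iff_inj_on_same_card)
  show "(\<lambda>i. mp i 1) ` {0..<n} \<subseteq> {0..<n}"
  proof (rule image_subsetI)
    fix i assume "i \<in> {0..<n}"
    then have "mp i \<in> rankings n"
      using assms(1) unfolding latin_men_prefs_def by blast
    then have "bij_betw (mp i) {1..n} {0..<n}"
      unfolding rankings_def by simp
    then show "mp i 1 \<in> {0..<n}"
      using assms(2) by (auto dest: bij_betwE)
  qed
  show "inj_on (\<lambda>i. mp i 1) {0..<n}"
    using assms by (auto simp: latin_men_prefs_def men_latin_def)
qed simp_all

lemma card_soulmate_pairs:
  assumes \<sigma>: "bij_betw (\<lambda>i. mp i 1) {0..<n} {0..<n}"
  defines "\<tau> \<equiv> inv_into {0..<n} (\<lambda>i. mp i 1)"
  shows "card (soulmate_pairs n mp wp) = card {j \<in> {0..<n}. wp j 1 = \<tau> j}"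
proof -
  have "soulmate_pairs n mp wp = (\<lambda>j. (\<tau> j, j)) ` {j \<in> {0..<n}. wp j 1 = \<tau> j}"
  proof (intro equalityI subsetI)
    fix p assume "p \<in> soulmate_pairs n mp wp"
    then obtain i where "p = (i, mp i 1)" "i < n" "wp (mp i 1) 1 = i"
      by (auto simp: soulmate_pairs_def)
    moreover have "\<tau> (mp i 1) = i"
      using bij_betw_inv_into_left[OF \<sigma>, of i] \<open>i < n\<close> unfolding \<tau>_def by simp
    ultimately show "p \<in> (\<lambda>j. (\<tau> j, j)) ` {j \<in> {0..<n}. wp j 1 = \<tau> j}"
      using bij_betwE[OF \<sigma>] by force
  next
    fix p assume "p \<in> (\<lambda>j. (\<tau> j, j)) ` {j \<in> {0..<n}. wp j 1 = \<tau> j}"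
    then obtain j where "p = (\<tau> j, j)" "j < n" "wp j 1 = \<tau> j"
      by auto
    moreover have "\<tau> j < n" "mp (\<tau> j) 1 = j"
      using bij_betwE[OF bij_betw_inv_into[OF \<sigma>]] bij_betw_inv_into_right[OF \<sigma>, of j] \<open>j < n\<close>
      unfolding \<tau>_def by auto
    ultimately show "p \<in> soulmate_pairs n mp wp"
      by (simp add: soulmate_pairs_def)
  qed
  then show ?thesis
    by (simp add: card_image inj_on_def)
qed

lemma card_women_prefs_with_soulmates:
  assumes mp: "mp \<in> latin_men_prefs n" and "n \<ge> 1" "k \<le> n"
  shows "card {wp \<in> {0..<n} \<rightarrow>\<^sub>E rankings n. card (soulmate_pairs n mp wp) = k}
       = (n choose k) * (n - 1) ^ (n - k) * fact (n - 1) ^ n"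
proof -
  define \<tau> where "\<tau> = inv_into {0..<n} (\<lambda>i. mp i 1)"
  have \<sigma>: "bij_betw (\<lambda>i. mp i 1) {0..<n} {0..<n}"
    using first_choices_bij_betw[OF mp \<open>n \<ge> 1\<close>] .
  have "{wp \<in> {0..<n} \<rightarrow>\<^sub>E rankings n. card (soulmate_pairs n mp wp) = k}
      = {wp \<in> {0..<n} \<rightarrow>\<^sub>E rankings n. card {j \<in> {0..<n}. wp j 1 = \<tau> j} = k}"
    using card_soulmate_pairs[of mp n, OF \<sigma>] by (simp add: \<tau>_def)
  also have "card \<dots> = (n choose k) * fact (n - 1) ^ k * (fact n - fact (n - 1)) ^ (n - k)"
  proof (subst card_PiE_exactly_hits)
    show "card {r \<in> rankings n. r 1 = \<tau> j} = fact (n - 1)" if "j \<in> {0..<n}" for j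
    proof (rule card_rankings_first_choice)
      show "\<tau> j < n"
        using bij_betwE[OF bij_betw_inv_into[OF \<sigma>]] that unfolding \<tau>_def by auto
    qed
  qed (simp_all add: finite_rankings card_rankings)
  also have "fact n - fact (n - 1) = (n - 1) * (fact (n - 1) :: nat)"
    using \<open>n \<ge> 1\<close> by (simp add: fact_reduce[of n] diff_mult_distrib)
  also have "(n choose k) * fact (n - 1) ^ k * ((n - 1) * fact (n - 1)) ^ (n - k)
      = (n choose k) * (n - 1) ^ (n - k) * (fact (n - 1) ^ k * fact (n - 1) ^ (n - k))"
    by (simp add: power_mult_distrib)
  also have "fact (n - 1) ^ k * fact (n - 1) ^ (n - k) = (fact (n - 1) :: nat) ^ n"
    using \<open>k \<le> n\<close> by (simp flip: power_add)
  finally show ?thesis .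
qed

theorem mainTheorem4:
  fixes n k :: nat
  assumes "n \<ge> 1" and "k \<le> n"
  shows "card {(mp, wp) \<in> profiles n. men_latin n mp \<and> card (soulmate_pairs n mp wp) = k}
       = num_latin_squares n * (n choose k) * (n - 1) ^ (n - k) * (fact (n - 1)) ^ n"
proof -
  define W where "W mp = {wp \<in> {0..<n} \<rightarrow>\<^sub>E rankings n. card (soulmate_pairs n mp wp) = k}" for mp
  have "{(mp, wp) \<in> profiles n. men_latin n mp \<and> card (soulmate_pairs n mp wp) = k}
      = Sigma (latin_men_prefs n) W"
    unfolding profiles_def latin_men_prefs_def W_def by blast
  moreover have "finite (latin_men_prefs n)" "\<forall>mp \<in> latin_men_prefs n. finite (W mp)"
    using finite_PiE[of "{0..<n}" "\<lambda>_. rankings n"]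
    by (auto simp: latin_men_prefs_def W_def finite_rankings)
  ultimately have "card {(mp, wp) \<in> profiles n. men_latin n mp \<and> card (soulmate_pairs n mp wp) = k}
      = (\<Sum>mp \<in> latin_men_prefs n. card (W mp))"
    by simp
  also have "\<dots> = card (latin_men_prefs n) * ((n choose k) * (n - 1) ^ (n - k) * fact (n - 1) ^ n)"
    using card_women_prefs_with_soulmates[OF _ assms] by (simp add: W_def)
  finally show ?thesis
    by (simp add: card_latin_men_prefs mult.assoc)
qed

end
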